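(* Let $p$ be a prime number. The $p$-adic topology on $\mathbb{N}\setminus p\mathbb{N}$ coincides with the zero-dimensional reflection of the subspace topology on $\mathbb{N}\setminus p\mathbb{N}$ inherited from the Golomb space $\mathbb{N}_\tau$.
   Context: $\mathbb{N}=\{1,2,\dots\}$, $\mathbb{N}_0=\{0\}\cup\mathbb{N}$. The Golomb topology $\tau$ on $\mathbb{N}$ is generated by the base of all sets $a+b\mathbb{N}_0=\{a+bn:n\in\mathbb{N}_0\}$ with $a,b\in\mathbb{N}$ coprime, and $\mathbb{N}_\tau=(\mathbb{N},\tau)$. The $p$-adic topology on a subset of $\mathbb{N}$ is the topology induced from the $p$-adic topology on $\mathbb{Z}$ (base: sets $x+p^n\mathbb{Z}$, $x\in\mathbb{Z}$, $n\in\mathbb{N}$); on $\mathbb{N}$ it is generated by the sets $x+p^n\mathbb{N}_0$, $x,n\in\mathbb{N}$. The zero-dimensional reflection of a topological space $X$ is the set $X$ with the topology generated by the base consisting of all clopen subsets of $X$. *)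

theory Defs
  imports "HOL-Analysis.Analysis"
begin

definition golomb_topology :: "nat topology" where
  "golomb_topology = topology_generated_by
     {{a + b * n | n. True} | a b. a \<ge> 1 \<and> b \<ge> 1 \<and> coprime a b}"

definition padic_topology :: "nat \<Rightarrow> nat topology" where
  "padic_topology p = topology_generated_by
     {{x + p ^ n * k | k. True} | x n. x \<ge> 1 \<and> n \<ge> 1}"

definition zero_dim_reflection :: "'a topology \<Rightarrow> 'a topology" where
  "zero_dim_reflection X = topology_generated_by {U. openin X U \<and> closedin X U}"

end

(* Inside S = N - pN, the p-adic ball x + p^n N0 contains the residue class of x modulo a
   large power p^N; since p^N is coprime to every element of S, all residue classes modulo p^N
   are open in the Golomb subspace S, hence clopen there.
   Conversely, let C be clopen in the Golomb subspace and x in C. Openness gives a progression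
   x + p^m c N0 inside C with p not dividing c. If some y = x + p^m k were outside C, the clopen
   complement S - C would likewise contain y + p^j e N0 with p not dividing e. Pick w in S
   divisible by c e with w = y modulo p^(m+j+1). A basic Golomb neighbourhood w + f N0 has f
   coprime to w, hence to c e, so by the Chinese remainder theorem it meets both progressions.
   Thus w lies in the closure of both, i.e. in C and in S - C: a contradiction. *)

theory Submission
  imports Defs "HOL-Number_Theory.Cong"
begin

lemma openin_topology_generated_by_base:
  assumes base: "\<And>B1 B2 x. B1 \<in> \<B> \<Longrightarrow> B2 \<in> \<B> \<Longrightarrow> x \<in> B1 \<inter> B2 \<Longrightarrow>
                   \<exists>B\<in>\<B>. x \<in> B \<and> B \<subseteq> B1 \<inter> B2"
  shows "openin (topology_generated_by \<B>) V \<longleftrightarrow> (\<forall>x\<in>V. \<exists>B\<in>\<B>. x \<in> B \<and> B \<subseteq> V)"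
proof
  assume "openin (topology_generated_by \<B>) V"
  then have "generate_topology_on \<B> V"
    by (rule openin_topology_generated_by)
  then show "\<forall>x\<in>V. \<exists>B\<in>\<B>. x \<in> B \<and> B \<subseteq> V"
  proof (induction rule: generate_topology_on.induct)
    case (Int a b)
    show ?case
    proof
      fix x assume "x \<in> a \<inter> b"
      then obtain B1 B2 where "B1 \<in> \<B>" "x \<in> B1" "B1 \<subseteq> a" "B2 \<in> \<B>" "x \<in> B2" "B2 \<subseteq> b"
        using Int.IH by (meson IntD1 IntD2)
      moreover obtain B where "B \<in> \<B>" "x \<in> B" "B \<subseteq> B1 \<inter> B2"
        using base[of B1 B2 x] calculation by blast
      ultimately show "\<exists>B\<in>\<B>. x \<in> B \<and> B \<subseteq> a \<inter> b"
        by blast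
    qed
  next
    case (UN K)
    show ?case
    proof
      fix x assume "x \<in> \<Union>K"
      then obtain k where "k \<in> K" "x \<in> k"
        by blast
      then obtain B where "B \<in> \<B>" "x \<in> B" "B \<subseteq> k"
        using UN.IH by meson
      with \<open>k \<in> K\<close> show "\<exists>B\<in>\<B>. x \<in> B \<and> B \<subseteq> \<Union>K"
        by blast
    qed
  qed auto
next
  assume cover: "\<forall>x\<in>V. \<exists>B\<in>\<B>. x \<in> B \<and> B \<subseteq> V"
  show "openin (topology_generated_by \<B>) V"
  proof (subst openin_subopen, intro ballI)
    fix x assume "x \<in> V"
    then obtain B where "B \<in> \<B>" "x \<in> B" "B \<subseteq> V"
      using cover by blast
    then show "\<exists>T. openin (topology_generated_by \<B>) T \<and> x \<in> T \<and> T \<subseteq> V"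
      using topology_generated_by_Basis by blast
  qed
qed

lemma openin_topology_generated_by_progressions:
  fixes m :: "'i \<Rightarrow> nat"
  assumes shift: "\<And>a i k. adm a i \<Longrightarrow> adm (a + m i * k) i"
    and refine: "\<And>a i j. adm a i \<Longrightarrow> adm a j \<Longrightarrow> \<exists>l. adm a l \<and> m i dvd m l \<and> m j dvd m l"
  shows "openin (topology_generated_by {{a + m i * k | k. True} | a i. adm a i}) V \<longleftrightarrow>
           (\<forall>x\<in>V. \<exists>i. adm x i \<and> (\<forall>k. x + m i * k \<in> V))"
proof -
  let ?\<B> = "{{a + m i * k | k. True} | a i. adm a i}"
  have basic: "{x + m i * k | k. True} \<in> ?\<B>" if "adm x i" for x i
    using that by blast
  have self: "x \<in> {x + m i * k | k. True}" for x i
    by (auto intro: exI[of _ 0])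
  have sub: "{x + m i * k | k. True} \<subseteq> {a + m i * k | k. True}" if "x = a + m i * k0" for x a i k0
  proof
    fix y assume "y \<in> {x + m i * k | k. True}"
    then obtain k where "y = x + m i * k"
      by blast
    then have "y = a + m i * (k0 + k)"
      using that by (simp add: algebra_simps)
    then show "y \<in> {a + m i * k | k. True}"
      by blast
  qed
  have sub_dvd: "{x + e * k | k. True} \<subseteq> {x + d * k | k. True}" if de: "d dvd e" for x d e :: nat
  proof
    fix y assume "y \<in> {x + e * k | k. True}"
    then obtain k where "y = x + e * k"
      by blast
    moreover obtain r where "e = d * r"
      using de by blast
    ultimately have "y = x + d * (r * k)"
      by (simp add: mult.assoc)
    then show "y \<in> {x + d * k | k. True}"
      by blast
  qed
  have member: "adm x i \<and> {x + m i * k | k. True} \<subseteq> B"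
    if B: "B = {a + m i * k | k. True}" "adm a i" "x \<in> B" for B x a i
  proof -
    obtain k0 where "x = a + m i * k0"
      using B(1,3) by blast
    then show ?thesis
      using shift[OF B(2), of k0] sub B(1) by simp
  qed
  show ?thesis
  proof (subst openin_topology_generated_by_base, goal_cases)
    case (1 B1 B2 x)
    then obtain a i a' j where B: "B1 = {a + m i * k | k. True}" "B2 = {a' + m j * k | k. True}"
      and "adm a i" "adm a' j"
      by blast
    then have "adm x i" "{x + m i * k | k. True} \<subseteq> B1" "adm x j" "{x + m j * k | k. True} \<subseteq> B2"
      using member 1(3) by blast+
    then obtain l where l: "adm x l" "m i dvd m l" "m j dvd m l"
      using refine by blast
    have "{x + m l * k | k. True} \<subseteq> B1" "{x + m l * k | k. True} \<subseteq> B2"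
      using subset_trans[OF sub_dvd[OF l(2)] \<open>{x + m i * k | k. True} \<subseteq> B1\<close>]
        subset_trans[OF sub_dvd[OF l(3)] \<open>{x + m j * k | k. True} \<subseteq> B2\<close>] .
    then show ?case
      by (intro bexI[OF _ basic[OF l(1)]] conjI self Int_greatest)
  next
    case 2
    have "(\<exists>B\<in>?\<B>. x \<in> B \<and> B \<subseteq> V) \<longleftrightarrow> (\<exists>i. adm x i \<and> (\<forall>k. x + m i * k \<in> V))" for x
    proof
      assume "\<exists>B\<in>?\<B>. x \<in> B \<and> B \<subseteq> V"
      then obtain B a i where "B = {a + m i * k | k. True}" "adm a i" "x \<in> B" "B \<subseteq> V"
        by blast
      then have "adm x i" "{x + m i * k | k. True} \<subseteq> V"
        using member by blast+
      then show "\<exists>i. adm x i \<and> (\<forall>k. x + m i * k \<in> V)"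
        by blast
    next
      assume "\<exists>i. adm x i \<and> (\<forall>k. x + m i * k \<in> V)"
      then obtain i where "adm x i" "\<forall>k. x + m i * k \<in> V"
        by blast
      then show "\<exists>B\<in>?\<B>. x \<in> B \<and> B \<subseteq> V"
        by (intro bexI[OF _ basic[OF \<open>adm x i\<close>]]) (auto simp: self)
    qed
    then show ?case
      by (simp only:)
  qed
qed

lemma coprime_add_mult_self: "coprime a b \<Longrightarrow> coprime (a + b * k) (b::nat)"
  by (metis coprime_iff_gcd_eq_1 gcd_add_mult gcd.commute mult.commute add.commute)

lemma openin_golomb_topology:
  "openin golomb_topology V \<longleftrightarrow> (\<forall>x\<in>V. \<exists>b. (x \<ge> 1 \<and> b \<ge> 1 \<and> coprime x b) \<and> (\<forall>k. x + b * k \<in> V))"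
  unfolding golomb_topology_def
proof (rule openin_topology_generated_by_progressions[where m = "\<lambda>b. b"])
  fix a b b' :: nat
  assume "1 \<le> a \<and> 1 \<le> b \<and> coprime a b" "1 \<le> a \<and> 1 \<le> b' \<and> coprime a b'"
  then show "\<exists>l. (1 \<le> a \<and> 1 \<le> l \<and> coprime a l) \<and> b dvd l \<and> b' dvd l"
    by (intro exI[of _ "b * b'"]) auto
qed (auto simp: coprime_add_mult_self)

lemma openin_padic_topology:
  "openin (padic_topology p) V \<longleftrightarrow> (\<forall>x\<in>V. \<exists>n. (x \<ge> 1 \<and> n \<ge> 1) \<and> (\<forall>k. x + p ^ n * k \<in> V))"
  unfolding padic_topology_def
proof (rule openin_topology_generated_by_progressions[where m = "\<lambda>n. p ^ n"])
  fix a n n' :: nat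
  assume "1 \<le> a \<and> 1 \<le> n" "1 \<le> a \<and> 1 \<le> n'"
  then show "\<exists>l. (1 \<le> a \<and> 1 \<le> l) \<and> p ^ n dvd p ^ l \<and> p ^ n' dvd p ^ l"
    by (intro exI[of _ "max n n'"]) (auto simp: le_imp_power_dvd)
qed auto

lemma openin_zero_dim_reflection:
  "openin (zero_dim_reflection X) U \<longleftrightarrow>
     (\<forall>x\<in>U. \<exists>C. openin X C \<and> closedin X C \<and> x \<in> C \<and> C \<subseteq> U)"
  unfolding zero_dim_reflection_def
proof (subst openin_topology_generated_by_base)
  fix B1 B2 x
  assume "B1 \<in> {C. openin X C \<and> closedin X C}" "B2 \<in> {C. openin X C \<and> closedin X C}"
    and "x \<in> B1 \<inter> B2"
  then show "\<exists>B\<in>{C. openin X C \<and> closedin X C}. x \<in> B \<and> B \<subseteq> B1 \<inter> B2"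
    by (intro bexI[of _ "B1 \<inter> B2"]) (auto intro: openin_Int closedin_Int)
qed (simp add: Bex_def conj_assoc)

lemma topspace_golomb_topology: "topspace golomb_topology = {n. n \<ge> 1}"
  unfolding golomb_topology_def topology_generated_by_topspace
proof (intro equalityI subsetI)
  fix x :: nat
  assume "x \<in> \<Union>{{a + b * n | n. True} | a b. a \<ge> 1 \<and> b \<ge> 1 \<and> coprime a b}"
  then obtain a b n where "x = a + b * n" "a \<ge> 1"
    by blast
  then show "x \<in> {n. n \<ge> 1}"
    by simp
next
  fix x :: nat
  assume "x \<in> {n. n \<ge> 1}"
  then have "{x + 1 * k | k. True} \<in> {{a + b * n | n. True} | a b. a \<ge> 1 \<and> b \<ge> 1 \<and> coprime a b}"
    by (intro CollectI exI[of _ x] exI[of _ "1::nat"]) simp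
  moreover have "x \<in> {x + 1 * k | k. True}"
    by (auto intro: exI[of _ 0])
  ultimately show "x \<in> \<Union>{{a + b * n | n. True} | a b. a \<ge> 1 \<and> b \<ge> 1 \<and> coprime a b}"
    by (rule UnionI)
qed

lemma topspace_golomb_subtopology:
  "0 \<notin> S \<Longrightarrow> topspace (subtopology golomb_topology S) = S"
  by (auto simp: topspace_golomb_topology Suc_le_eq intro!: gr0I)

lemma openin_golomb_subtopology:
  assumes "0 \<notin> S"
  shows "openin (subtopology golomb_topology S) U \<longleftrightarrow>
           U \<subseteq> S \<and> (\<forall>x\<in>U. \<exists>b\<ge>1. coprime x b \<and> (\<forall>k. x + b * k \<in> S \<longrightarrow> x + b * k \<in> U))"
proof
  assume "openin (subtopology golomb_topology S) U"
  then obtain T where "openin golomb_topology T" "U = T \<inter> S"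
    by (auto simp: openin_subtopology)
  then show "U \<subseteq> S \<and> (\<forall>x\<in>U. \<exists>b\<ge>1. coprime x b \<and> (\<forall>k. x + b * k \<in> S \<longrightarrow> x + b * k \<in> U))"
    unfolding openin_golomb_topology by blast
next
  assume U: "U \<subseteq> S \<and> (\<forall>x\<in>U. \<exists>b\<ge>1. coprime x b \<and> (\<forall>k. x + b * k \<in> S \<longrightarrow> x + b * k \<in> U))"
  show "openin (subtopology golomb_topology S) U"
  proof (subst openin_subopen, intro ballI)
    fix x assume "x \<in> U"
    then obtain b where b: "b \<ge> 1" "coprime x b" "\<forall>k. x + b * k \<in> S \<longrightarrow> x + b * k \<in> U"
      using U by blast
    have "x \<ge> 1"
      using \<open>x \<in> U\<close> U assms by (cases x) auto
    then have "openin golomb_topology {x + b * k | k. True}"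
      unfolding golomb_topology_def using b by (intro topology_generated_by_Basis) blast
    then have "openin (subtopology golomb_topology S) (S \<inter> {x + b * k | k. True})"
      by (rule openin_subtopology_Int2)
    moreover have "x \<in> S \<inter> {x + b * k | k. True}"
      using \<open>x \<in> U\<close> U by (auto intro: exI[of _ 0])
    ultimately show "\<exists>T. openin (subtopology golomb_topology S) T \<and> x \<in> T \<and> T \<subseteq> U"
      using b(3) by blast
  qed
qed

lemma golomb_residue_class_clopen:
  assumes "0 \<notin> S" "q \<ge> 1" "\<And>z. z \<in> S \<Longrightarrow> coprime z q"
  shows "openin (subtopology golomb_topology S) {z \<in> S. z mod q = r}"
    and "closedin (subtopology golomb_topology S) {z \<in> S. z mod q = r}"
proof -
  have classes_open: "openin (subtopology golomb_topology S) {z \<in> S. P (z mod q)}" for P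
    unfolding openin_golomb_subtopology[OF assms(1)] using assms(2,3) by auto
  then show "openin (subtopology golomb_topology S) {z \<in> S. z mod q = r}" .
  have "S - {z \<in> S. z mod q = r} = {z \<in> S. z mod q \<noteq> r}"
    by blast
  then show "closedin (subtopology golomb_topology S) {z \<in> S. z mod q = r}"
    using classes_open[of "\<lambda>u. u \<noteq> r"]
    unfolding closedin_def topspace_golomb_subtopology[OF assms(1)] by auto
qed

definition nonmultiples :: "nat \<Rightarrow> nat set" where
  "nonmultiples p = {n. n \<ge> 1 \<and> \<not> p dvd n}"

lemma mem_nonmultiples [simp]: "n \<in> nonmultiples p \<longleftrightarrow> \<not> p dvd n"
  by (cases n) (auto simp: nonmultiples_def)

lemma add_power_mult_mem_nonmultiples:
  "x \<in> nonmultiples p \<Longrightarrow> n \<ge> 1 \<Longrightarrow> x + p ^ n * k \<in> nonmultiples p"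
  by (simp add: dvd_add_left_iff dvd_power)

lemma openin_padic_nonmultiples: "openin (padic_topology p) (nonmultiples p)"
  unfolding openin_padic_topology
proof
  fix x assume "x \<in> nonmultiples p"
  then have "x \<ge> 1" "\<forall>k. x + p ^ 1 * k \<in> nonmultiples p"
    using add_power_mult_mem_nonmultiples[of x p 1] unfolding nonmultiples_def by auto
  then show "\<exists>n. (x \<ge> 1 \<and> n \<ge> 1) \<and> (\<forall>k. x + p ^ n * k \<in> nonmultiples p)"
    by blast
qed

lemma golomb_clopen_within_padic_ball:
  assumes "prime p" "x \<in> nonmultiples p"
  obtains C where "openin (subtopology golomb_topology (nonmultiples p)) C"
    "closedin (subtopology golomb_topology (nonmultiples p)) C"
    "x \<in> C" "\<And>z. z \<in> C \<Longrightarrow> \<exists>k. z = x + p ^ n * k"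
proof -
  define N where "N = n + x"
  define C where "C = {z \<in> nonmultiples p. z mod p ^ N = x mod p ^ N}"
  have p: "p \<ge> 2"
    using assms(1) by (rule prime_ge_2_nat)
  have "x < 2 ^ x"
    by (rule less_exp)
  also have "\<dots> \<le> p ^ x"
    using p by (simp add: power_mono)
  also have "\<dots> \<le> p ^ N"
    using p by (simp add: N_def power_increasing)
  \<comment> \<open>so every \<open>z \<equiv> x (mod p ^ N)\<close> satisfies \<open>z \<ge> x\<close>\<close>
  finally have x_mod: "x mod p ^ N = x"
    by simp
  have pN: "p ^ N \<ge> 1"
    using p by (simp add: one_le_power)
  have coprime: "coprime z (p ^ N)" if "z \<in> nonmultiples p" for z
    using that assms(1) by (simp add: prime_imp_coprime coprime_commute)
  have "openin (subtopology golomb_topology (nonmultiples p)) C"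
    unfolding C_def by (rule golomb_residue_class_clopen(1)[OF _ pN coprime]) simp
  moreover have "closedin (subtopology golomb_topology (nonmultiples p)) C"
    unfolding C_def by (rule golomb_residue_class_clopen(2)[OF _ pN coprime]) simp
  moreover have "x \<in> C"
    using assms(2) by (simp add: C_def)
  moreover have "\<exists>k. z = x + p ^ n * k" if "z \<in> C" for z
  proof -
    have "z mod p ^ N = x"
      using that x_mod by (simp add: C_def)
    then have "z = x + p ^ N * (z div p ^ N)"
      by (metis mod_mult_div_eq)
    then show ?thesis
      by (auto simp: N_def power_add mult.assoc)
  qed
  ultimately show ?thesis
    using that by blast
qed

lemma progressions_intersect:
  fixes a b f g :: nat
  assumes "f \<noteq> 0" "g \<noteq> 0" "[a = b] (mod gcd f g)"
  shows "\<exists>k l. a + f * k = b + g * l"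
proof -
  let ?d = "gcd f g"
  have "[g * a = 0] (mod ?d)"
    by (simp add: cong_0_iff)
  then have "[b + g * a = a + 0] (mod ?d)"
    using assms(3) by (blast intro: cong_add cong_sym)
  then have "[b + g * a = a] (mod ?d)"
    by simp
  \<comment> \<open>adding the multiple \<open>g * a\<close> of \<open>g\<close> makes the difference to \<open>a\<close> a natural number\<close>
  moreover have "a \<le> b + g * a"
    using assms(2) by (cases g) auto
  ultimately obtain t where t: "b + g * a = t * ?d + a"
    using cong_le_nat by blast
  obtain u v where uv: "f * u = g * v + ?d"
    using bezout_nat[OF assms(1)] by blast
  have "a + f * (u * t) = a + (g * v + ?d) * t"
    by (simp flip: uv mult.assoc)
  also have "\<dots> = b + g * (a + v * t)"
    using t by (simp add: algebra_simps)
  finally show ?thesis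
    by blast
qed

lemma progression_meets_progression_of_divisor:
  fixes w f x q c :: nat
  assumes "coprime w f" "f \<noteq> 0" "c dvd w" "q * c \<noteq> 0" "[w = x] (mod q)"
  shows "\<exists>k l. w + f * k = x + q * c * l"
proof -
  have "coprime f c"
    using assms(1,3) by (auto simp: coprime_commute elim!: dvdE)
  then have "coprime (gcd f (q * c)) c"
    by (rule coprime_divisors[OF gcd_dvd1 dvd_refl])
  then have "gcd f (q * c) dvd q"
    using gcd_dvd2 coprime_dvd_mult_left_iff by blast
  with assms(5) have "[w = x] (mod gcd f (q * c))"
    by (rule cong_dvd_modulus_nat)
  then show ?thesis
    by (rule progressions_intersect[OF assms(2,4)])
qed

lemma exists_multiple_congruent:
  fixes d q y :: nat
  assumes "coprime d q"
  obtains w where "d dvd w" "[w = y] (mod q)"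
proof -
  obtain u where "[d * u = 1] (mod q)"
    using cong_solve_coprime_nat[OF assms] by auto
  then have "[d * u * y = 1 * y] (mod q)"
    by (rule cong_scalar_right)
  then show ?thesis
    using that[of "d * u * y"] by (simp add: mult.assoc)
qed

lemma golomb_closedin_contains_congruent:
  assumes "0 \<notin> S" and closed: "closedin (subtopology golomb_topology S) C"
    and prog: "\<And>l. x + q * c * l \<in> C"
    and "w \<in> S" "c dvd w" "q * c \<noteq> 0" "[w = x] (mod q)"
  shows "w \<in> C"
proof (rule ccontr)
  assume "w \<notin> C"
  have "openin (subtopology golomb_topology S) (S - C)"
    using closed unfolding closedin_def topspace_golomb_subtopology[OF assms(1)] by blast
  then obtain f where f: "f \<ge> 1" "coprime w f" "\<And>k. w + f * k \<in> S \<Longrightarrow> w + f * k \<in> S - C"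
    using \<open>w \<in> S\<close> \<open>w \<notin> C\<close> assms(1) unfolding openin_golomb_subtopology[OF assms(1)] by blast
  obtain k l where kl: "w + f * k = x + q * c * l"
    using progression_meets_progression_of_divisor[OF f(2) _ assms(5-7)] f(1) by auto
  have "x + q * c * l \<in> S"
    using prog closedin_imp_subset[OF closed] by blast
  then show False
    using f(3)[of k] prog[of l] kl by simp
qed

lemma golomb_open_contains_progression:
  assumes "prime p" "openin (subtopology golomb_topology (nonmultiples p)) V" "x \<in> V"
  obtains m c where "m \<ge> 1" "\<not> p dvd c" "\<And>k. x + p ^ m * c * k \<in> V"
proof -
  have "0 \<notin> nonmultiples p"
    by simp
  then obtain b where b: "b \<ge> 1" "coprime x b"
      "\<And>k. x + b * k \<in> nonmultiples p \<Longrightarrow> x + b * k \<in> V" and x: "x \<in> nonmultiples p"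
    using assms(2,3) unfolding openin_golomb_subtopology[OF \<open>0 \<notin> nonmultiples p\<close>] by blast
  have "b \<noteq> 0" "\<not> is_unit p"
    using b(1) assms(1) by (auto simp: not_prime_unit)
  then obtain c where c: "b = p ^ multiplicity p b * c" "\<not> p dvd c"
    by (rule multiplicity_decompose')
  have progression: "x + p ^ Suc (multiplicity p b) * c * k \<in> V" for k
  proof -
    have eq: "x + p ^ Suc (multiplicity p b) * c * k = x + b * (p * k)"
      by (subst c(1)) (simp add: algebra_simps)
    have "x + b * (p * k) \<in> nonmultiples p"
      using add_power_mult_mem_nonmultiples[OF x, of 1 "b * k"] by (simp add: algebra_simps)
    then show ?thesis
      unfolding eq by (rule b(3))
  qed
  then show ?thesis
    using that[OF _ c(2) progression] by simp
qed

lemma golomb_closed_sets_meet: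
  assumes p: "prime p"
    and closed_A: "closedin (subtopology golomb_topology (nonmultiples p)) A"
    and closed_B: "closedin (subtopology golomb_topology (nonmultiples p)) B"
    and prog_A: "\<And>k. x + p ^ m * c * k \<in> A" and "\<not> p dvd c"
    and prog_B: "\<And>k. y + p ^ j * e * k \<in> B" and "\<not> p dvd e"
    and "[y = x] (mod p ^ m)"
  shows "A \<inter> B \<noteq> {}"
proof -
  let ?S = "nonmultiples p"
  have "y \<in> ?S"
    using prog_B[of 0] closedin_imp_subset[OF closed_B] by auto
  have "coprime c p" "coprime e p"
    using prime_imp_coprime[OF p] assms(5,7) coprime_commute by blast+
  then have "coprime (c * e) (p ^ Suc (m + j))"
    by simp
  then obtain w where w: "c * e dvd w" "[w = y] (mod p ^ Suc (m + j))"
    by (rule exists_multiple_congruent)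
  have "[w = y] (mod p)"
    using w(2) by (rule cong_dvd_modulus_nat) simp
  with \<open>y \<in> ?S\<close> have "w \<in> ?S"
    by (simp add: cong_dvd_iff)
  have "p ^ m dvd p ^ Suc (m + j)" "p ^ j dvd p ^ Suc (m + j)"
    by (simp_all add: le_imp_power_dvd)
  then have "[w = y] (mod p ^ m)" "[w = y] (mod p ^ j)"
    using cong_dvd_modulus_nat[OF w(2)] by blast+
  then have "[w = x] (mod p ^ m)"
    using assms(8) by (blast intro: cong_trans)
  have "p \<noteq> 0"
    using p by auto
  moreover have "c \<noteq> 0" "e \<noteq> 0"
    using assms(5,7) dvd_0_right by metis+
  moreover have "c dvd w" "e dvd w"
    using dvd_mult_left[OF w(1)] dvd_mult_right[OF w(1)] .
  ultimately have "w \<in> A" "w \<in> B"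
    using golomb_closedin_contains_congruent[OF _ closed_A prog_A \<open>w \<in> ?S\<close> \<open>c dvd w\<close> _ \<open>[w = x] (mod p ^ m)\<close>]
      golomb_closedin_contains_congruent[OF _ closed_B prog_B \<open>w \<in> ?S\<close> \<open>e dvd w\<close> _ \<open>[w = y] (mod p ^ j)\<close>]
    by simp_all
  then show ?thesis
    by blast
qed

lemma golomb_clopen_contains_padic_ball:
  assumes p: "prime p"
    and open_C: "openin (subtopology golomb_topology (nonmultiples p)) C"
    and closed_C: "closedin (subtopology golomb_topology (nonmultiples p)) C"
    and "x \<in> C"
  obtains n where "n \<ge> 1" "\<And>k. x + p ^ n * k \<in> C"
proof -
  let ?S = "nonmultiples p"
  let ?G = "subtopology golomb_topology ?S"
  obtain m c where m: "m \<ge> 1" and c: "\<not> p dvd c" and prog_C: "\<And>k. x + p ^ m * c * k \<in> C"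
    using golomb_open_contains_progression[OF p open_C \<open>x \<in> C\<close>] by blast
  have topspace: "topspace ?G = ?S"
    by (rule topspace_golomb_subtopology) simp
  have "?S - (?S - C) = C"
    using openin_imp_subset[OF open_C] by blast
  then have open_D: "openin ?G (?S - C)" and closed_D: "closedin ?G (?S - C)"
    using closed_C open_C unfolding closedin_def topspace by simp_all
  have "x \<in> ?S"
    using openin_imp_subset[OF open_C] \<open>x \<in> C\<close> by blast
  have "x + p ^ m * k \<in> C" for k
  proof (rule ccontr)
    let ?y = "x + p ^ m * k"
    assume "?y \<notin> C"
    then have y_D: "?y \<in> ?S - C"
      using add_power_mult_mem_nonmultiples[OF \<open>x \<in> ?S\<close> m] by simp
    obtain j e where "j \<ge> 1" and e: "\<not> p dvd e" and prog_D: "\<And>k. ?y + p ^ j * e * k \<in> ?S - C"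
      using golomb_open_contains_progression[OF p open_D y_D] by blast
    have "[?y = x] (mod p ^ m)"
      by (simp add: cong_add_lcancel_0_nat cong_0_iff)
    then have "C \<inter> (?S - C) \<noteq> {}"
      by (rule golomb_closed_sets_meet[OF p closed_C closed_D prog_C c prog_D e])
    then show False
      by blast
  qed
  then show ?thesis
    using that m by blast
qed

lemma openin_padic_subtopology_nonmultiples:
  "openin (subtopology (padic_topology p) (nonmultiples p)) U \<longleftrightarrow>
     U \<subseteq> nonmultiples p \<and> (\<forall>x\<in>U. \<exists>n\<ge>1. \<forall>k. x + p ^ n * k \<in> U)"
proof -
  have "x \<ge> 1" if "x \<in> nonmultiples p" for x
    using that by (simp add: nonmultiples_def)
  then show ?thesis
    unfolding openin_open_subtopology[OF openin_padic_nonmultiples] openin_padic_topology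
    by (auto simp del: mem_nonmultiples)
qed

lemma openin_zero_dim_reflection_golomb_nonmultiples:
  assumes "prime p"
  shows "openin (zero_dim_reflection (subtopology golomb_topology (nonmultiples p))) U \<longleftrightarrow>
           U \<subseteq> nonmultiples p \<and> (\<forall>x\<in>U. \<exists>n\<ge>1. \<forall>k. x + p ^ n * k \<in> U)"
  (is "_ \<longleftrightarrow> ?padic")
proof -
  let ?G = "subtopology golomb_topology (nonmultiples p)"
  have "(\<forall>x\<in>U. \<exists>C. openin ?G C \<and> closedin ?G C \<and> x \<in> C \<and> C \<subseteq> U) \<longleftrightarrow> ?padic"
  proof (intro iffI conjI ballI)
    fix x assume ?padic and "x \<in> U"
    then obtain n where "x \<in> nonmultiples p" and ball: "\<forall>k. x + p ^ n * k \<in> U"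
      by blast
    then obtain C where "openin ?G C" "closedin ?G C" "x \<in> C"
      and "\<And>z. z \<in> C \<Longrightarrow> \<exists>k. z = x + p ^ n * k"
      using golomb_clopen_within_padic_ball[OF assms] by blast
    moreover from this(4) ball have "C \<subseteq> U"
      by blast
    ultimately show "\<exists>C. openin ?G C \<and> closedin ?G C \<and> x \<in> C \<and> C \<subseteq> U"
      by (intro exI[of _ C] conjI)
  next
    assume clopen: "\<forall>x\<in>U. \<exists>C. openin ?G C \<and> closedin ?G C \<and> x \<in> C \<and> C \<subseteq> U"
    show "U \<subseteq> nonmultiples p"
    proof
      fix x assume "x \<in> U"
      then obtain C where "openin ?G C" "x \<in> C" "C \<subseteq> U"
        using clopen by blast
      then show "x \<in> nonmultiples p"
        using openin_imp_subset by blast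
    qed
    fix x assume "x \<in> U"
    then obtain C where "openin ?G C" "closedin ?G C" "x \<in> C" "C \<subseteq> U"
      using clopen by blast
    moreover obtain n where "n \<ge> 1" "\<And>k. x + p ^ n * k \<in> C"
      using golomb_clopen_contains_padic_ball[OF assms calculation(1-3)] by blast
    ultimately show "\<exists>n\<ge>1. \<forall>k. x + p ^ n * k \<in> U"
      by blast
  qed
  then show ?thesis
    unfolding openin_zero_dim_reflection .
qed

theorem lemma3p2:
  fixes p :: nat
  assumes "prime p"
  shows "subtopology (padic_topology p) {n. n \<ge> 1 \<and> \<not> p dvd n}
         = zero_dim_reflection (subtopology golomb_topology {n. n \<ge> 1 \<and> \<not> p dvd n})"
proof -
  have "subtopology (padic_topology p) (nonmultiples p) =
          zero_dim_reflection (subtopology golomb_topology (nonmultiples p))"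
    unfolding topology_eq openin_padic_subtopology_nonmultiples
      openin_zero_dim_reflection_golomb_nonmultiples[OF assms] by (intro allI refl)
  then show ?thesis
    by (simp only: nonmultiples_def)
qed

end
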